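(* (i) If $1\le q<p<\infty$, then the pair $(\ell_p,\ell_q)$ has the sBPBp. (ii) If $1<p\le q<\infty$, then the pair $(\ell_p,\ell_q)$ fails the sBPBp.
   Context: Scalars $\mathbb{K}=\mathbb{R}$ or $\mathbb{C}$; $\ell_p$ is the usual sequence space. $S_X$ is the unit sphere of $X$, $\mathcal{L}(X,Y)$ the bounded linear operators. A pair $(X,Y)$ has the strong Bishop–Phelps–Bollobás property (sBPBp) if for every $\varepsilon>0$ and every $T\in\mathcal{L}(X,Y)$ with $\|T\|=1$ there exists $\eta=\eta(\varepsilon,T)>0$ such that whenever $x_0\in S_X$ satisfies $\|T(x_0)\|>1-\eta$, there exists $x_1\in S_X$ with $\|T(x_1)\|=1$ and $\|x_1-x_0\|<\varepsilon$. *)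

theory Defs
  imports "HOL-Analysis.Analysis"
begin

definition lp :: "real \<Rightarrow> (nat \<Rightarrow> 'a::real_normed_field) set" where
  "lp p = {x. summable (\<lambda>n. norm (x n) powr p)}"

definition lp_norm :: "real \<Rightarrow> (nat \<Rightarrow> 'a::real_normed_field) \<Rightarrow> real" where
  "lp_norm p x = (\<Sum>n. norm (x n) powr p) powr (1 / p)"

definition bounded_op :: "real \<Rightarrow> real \<Rightarrow> ((nat \<Rightarrow> 'a::real_normed_field) \<Rightarrow> (nat \<Rightarrow> 'a)) \<Rightarrow> bool" where
  "bounded_op p q T \<longleftrightarrow>
     (\<forall>x\<in>lp p. T x \<in> lp q) \<and>
     (\<forall>x\<in>lp p. \<forall>y\<in>lp p. T (\<lambda>n. x n + y n) = (\<lambda>n. T x n + T y n)) \<and>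
     (\<forall>c. \<forall>x\<in>lp p. T (\<lambda>n. c * x n) = (\<lambda>n. c * T x n)) \<and>
     (\<exists>C. \<forall>x\<in>lp p. lp_norm q (T x) \<le> C * lp_norm p x)"

definition op_norm :: "real \<Rightarrow> real \<Rightarrow> ((nat \<Rightarrow> 'a::real_normed_field) \<Rightarrow> (nat \<Rightarrow> 'a)) \<Rightarrow> real" where
  "op_norm p q T = Sup {lp_norm q (T x) | x. x \<in> lp p \<and> lp_norm p x = 1}"

definition sBPBp :: "'a::real_normed_field itself \<Rightarrow> real \<Rightarrow> real \<Rightarrow> bool" where
  "sBPBp (_ :: 'a itself) p q \<longleftrightarrow>
     (\<forall>\<epsilon>>0. \<forall>T :: (nat \<Rightarrow> 'a) \<Rightarrow> (nat \<Rightarrow> 'a).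
        bounded_op p q T \<and> op_norm p q T = 1 \<longrightarrow>
        (\<exists>\<eta>>0. \<forall>x0\<in>lp p. lp_norm p x0 = 1 \<and> lp_norm q (T x0) > 1 - \<eta> \<longrightarrow>
           (\<exists>x1\<in>lp p. lp_norm p x1 = 1 \<and> lp_norm q (T x1) = 1 \<and>
              lp_norm p (\<lambda>n. x1 n - x0 n) < \<epsilon>)))"

end

theory Submission
  imports Defs "HOL-Library.Diagonal_Subsequence"
begin

text \<open>
  For \<open>q < p\<close> the point is that a norm-one operator \<open>T : \<ell>\<^sub>p \<rightarrow> \<ell>\<^sub>q\<close> behaves compactly on
  almost norming sequences. Given unit vectors \<open>x\<^sub>k\<close> with \<open>\<parallel>T x\<^sub>k\<parallel> \<rightarrow> 1\<close>, pass to a subsequence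
  along which \<open>x\<^sub>k\<close> and \<open>T x\<^sub>k\<close> converge coordinatewise, to \<open>x\<close> and \<open>y\<close>, and put
  \<open>d\<^sub>k = x\<^sub>k - x\<close>. A gliding hump argument shows first that \<open>T d\<^sub>k \<rightarrow> 0\<close> coordinatewise:
  \<open>N\<close> almost disjoint humps have \<open>p\<close>-norm \<open>O(N\<^sup>1\<^sup>/\<^sup>p)\<close>, while a fixed coordinate of their
  image would grow linearly in \<open>N\<close> (this uses \<open>p > 1\<close>). It then shows \<open>\<parallel>T d\<^sub>k\<parallel>\<^sub>q \<rightarrow> 0\<close>: otherwise
  one finds \<open>N\<close> humps whose images have \<open>q\<close>-norm at least \<open>\<delta>\<close>; the images add up to
  \<open>q\<close>-norm of order \<open>N\<^sup>1\<^sup>/\<^sup>q\<close>, the humps only to \<open>p\<close>-norm \<open>O(N\<^sup>1\<^sup>/\<^sup>p)\<close> (this uses \<open>q < p\<close>). Hence \<open>\<parallel>T x\<parallel>\<^sub>q = 1 = \<parallel>x\<parallel>\<^sub>p\<close>, and coordinatewise convergence of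
  unit vectors to a unit vector is norm convergence (Radon--Riesz), so every almost norming
  vector is close to a norm-attaining one.

  For \<open>p \<le> q\<close> the diagonal operator with weights \<open>(n + 1)/(n + 2)\<close> has norm \<open>1\<close>, approached on
  the unit vectors, but it strictly shrinks every nonzero vector, so its norm is attained nowhere.
\<close>

lemma powr_le_powr_iff:
  fixes x y p :: real
  assumes "p > 0" "x \<ge> 0" "y \<ge> 0"
  shows "x powr p \<le> y powr p \<longleftrightarrow> x \<le> y"
  using assms powr_mono2[of p x y] powr_less_mono2[of p y x] by (auto simp: not_le[symmetric])

lemma powr_le_self:
  fixes u p :: real
  assumes "0 \<le> u" "u \<le> 1" "p \<ge> 1"
  shows "u powr p \<le> u"
  using assms powr_le_one_le[of u p] by (cases "u = 0") auto

lemma powr_convex_combination: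
  fixes a b t p :: real
  assumes "p \<ge> 1" "a \<ge> 0" "b \<ge> 0" "0 \<le> t" "t \<le> 1"
  shows "(t*a + (1-t)*b) powr p \<le> t * a powr p + (1-t) * b powr p"
proof -
  consider "a = 0" | "b = 0" | "a > 0" "b > 0" using assms by linarith
  then show ?thesis
  proof cases
    case 1
    have "((1-t)*b) powr p = (1-t) powr p * b powr p" using assms by (simp add: powr_mult)
    also have "\<dots> \<le> (1-t) * b powr p" using assms by (intro mult_right_mono powr_le_self) auto
    finally show ?thesis using 1 assms by simp
  next
    case 2
    have "(t*a) powr p = t powr p * a powr p" using assms by (simp add: powr_mult)
    also have "\<dots> \<le> t * a powr p" using assms by (intro mult_right_mono powr_le_self) auto
    finally show ?thesis using 2 assms by simp
  next
    case 3
    have "((1 - t) *\<^sub>R b + t *\<^sub>R a) powr p \<le> (1 - t) * b powr p + t * a powr p"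
      using convex_onD[OF powr_convex[OF assms(1)], of t b a] 3 assms by auto
    then show ?thesis by (simp add: algebra_simps)
  qed
qed

lemma norm_add_powr_le:
  fixes a b :: "'a::real_normed_vector"
  assumes "p \<ge> 0"
  shows "norm (a + b) powr p \<le> 2 powr p * (norm a powr p + norm b powr p)"
proof -
  have "norm (a + b) \<le> 2 * max (norm a) (norm b)"
    by (smt (verit) norm_triangle_ineq)
  then have "norm (a + b) powr p \<le> (2 * max (norm a) (norm b)) powr p"
    using assms by (intro powr_mono2) auto
  also have "\<dots> = 2 powr p * max (norm a) (norm b) powr p" by (simp add: powr_mult)
  also have "\<dots> \<le> 2 powr p * (norm a powr p + norm b powr p)"
    by (intro mult_left_mono) (auto simp: max_def)
  finally show ?thesis .
qed

text \<open>Minkowski's inequality pointwise: \<open>(a + b)/(A + B)\<close> is a convex combination of \<open>a/A\<close>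
  and \<open>b/B\<close>.\<close>
lemma norm_add_powr_le_convex:
  fixes a b :: "'a::real_normed_vector"
  assumes p: "p \<ge> 1" and A: "A > 0" and B: "B > 0"
  shows "norm (a + b) powr p / (A + B) powr p
    \<le> A / (A + B) * (norm a powr p / A powr p) + B / (A + B) * (norm b powr p / B powr p)"
proof -
  define t where "t = A / (A + B)"
  have t: "0 \<le> t" "t \<le> 1" "1 - t = B / (A + B)" using A B by (auto simp: t_def field_simps)
  have "norm (a + b) / (A + B) \<le> (norm a + norm b) / (A + B)"
    using A B norm_triangle_ineq[of a b] by (intro divide_right_mono) auto
  also have "\<dots> = t * (norm a / A) + (1 - t) * (norm b / B)"
    unfolding t(3) using A B by (simp add: t_def add_divide_distrib)
  finally have "(norm (a + b) / (A + B)) powr p \<le> (t * (norm a / A) + (1 - t) * (norm b / B)) powr p"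
    using p A B by (intro powr_mono2) auto
  also have "\<dots> \<le> t * (norm a / A) powr p + (1 - t) * (norm b / B) powr p"
    using A B t p by (intro powr_convex_combination) auto
  finally show ?thesis unfolding t(3) by (simp add: powr_divide t_def)
qed

section \<open>Sequence spaces\<close>

definition lp_powsum :: "real \<Rightarrow> (nat \<Rightarrow> 'a::real_normed_field) \<Rightarrow> real" where
  "lp_powsum p x = (\<Sum>n. norm (x n) powr p)"

lemma mem_lp_iff: "x \<in> lp p \<longleftrightarrow> summable (\<lambda>n. norm (x n) powr p)"
  by (simp add: lp_def)

lemma lp_norm_eq_powsum_root: "lp_norm p x = lp_powsum p x powr (1/p)"
  by (simp add: lp_norm_def lp_powsum_def)

lemma lp_powsum_nonneg: "x \<in> lp p \<Longrightarrow> lp_powsum p x \<ge> 0"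
  unfolding lp_powsum_def mem_lp_iff by (auto intro: suminf_nonneg)

lemma lp_norm_nonneg: "lp_norm p x \<ge> 0"
  by (simp add: lp_norm_def)

lemma lp_norm_powr: "x \<in> lp p \<Longrightarrow> p > 0 \<Longrightarrow> lp_norm p x powr p = lp_powsum p x"
  by (simp add: lp_norm_eq_powsum_root powr_powr lp_powsum_nonneg)

lemma lp_powsum_le_powr_iff:
  "x \<in> lp p \<Longrightarrow> p > 0 \<Longrightarrow> c \<ge> 0 \<Longrightarrow> lp_powsum p x \<le> c powr p \<longleftrightarrow> lp_norm p x \<le> c"
  by (metis lp_norm_powr lp_norm_nonneg powr_le_powr_iff)

lemma lp_norm_less_iff:
  assumes x: "x \<in> lp p" and y: "y \<in> lp p" and p: "p > 0"
  shows "lp_norm p x < lp_norm p y \<longleftrightarrow> lp_powsum p x < lp_powsum p y"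
  using lp_powsum_le_powr_iff[OF y p lp_norm_nonneg[of p x]] lp_norm_powr[OF x p]
  by (simp add: not_le[symmetric])

lemma lp_norm_less_root:
  "x \<in> lp p \<Longrightarrow> p > 0 \<Longrightarrow> lp_powsum p x < e \<Longrightarrow> lp_norm p x < e powr (1/p)"
  unfolding lp_norm_eq_powsum_root using lp_powsum_nonneg[of x p] by (intro powr_less_mono2) auto

lemma lp_norm_eq_0_imp_zero:
  assumes x: "x \<in> lp p" and p: "p > 0" and "lp_norm p x = 0"
  shows "x = (\<lambda>n. 0)"
proof -
  have "(\<Sum>n. norm (x n) powr p) = 0"
    using lp_norm_powr[OF x p] assms(3) p by (simp add: lp_powsum_def)
  then show ?thesis
    using x suminf_eq_zero_iff[of "\<lambda>n. norm (x n) powr p"] by (auto simp: mem_lp_iff)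
qed

lemma zero_in_lp: "(\<lambda>n. 0) \<in> lp p"
  by (simp add: mem_lp_iff)

lemma lp_norm_zero: "lp_norm p (\<lambda>n. 0::'a::real_normed_field) = 0"
  by (simp add: lp_norm_def)

lemma lp_add: "x \<in> lp p \<Longrightarrow> y \<in> lp p \<Longrightarrow> p \<ge> 0 \<Longrightarrow> (\<lambda>n. x n + y n) \<in> lp p"
  unfolding mem_lp_iff
  by (rule summable_comparison_test'[where N=0 and g="\<lambda>n. 2 powr p * (norm (x n) powr p + norm (y n) powr p)"])
    (auto intro: summable_mult summable_add norm_add_powr_le)

lemma lp_scale: "x \<in> lp p \<Longrightarrow> (\<lambda>n. c * x n) \<in> lp p"
  unfolding mem_lp_iff by (simp add: norm_mult powr_mult)

lemma lp_uminus: "x \<in> lp p \<Longrightarrow> (\<lambda>n. - x n) \<in> lp p"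
  unfolding mem_lp_iff by simp

lemma lp_diff: "x \<in> lp p \<Longrightarrow> y \<in> lp p \<Longrightarrow> p \<ge> 0 \<Longrightarrow> (\<lambda>n. x n - y n) \<in> lp p"
  using lp_add[OF _ lp_uminus] by fastforce

lemma lp_sum:
  "finite I \<Longrightarrow> (\<And>i. i \<in> I \<Longrightarrow> f i \<in> lp p) \<Longrightarrow> p \<ge> 0 \<Longrightarrow> (\<lambda>n. \<Sum>i\<in>I. f i n) \<in> lp p"
proof (induction I rule: finite_induct)
  case empty then show ?case by (simp add: zero_in_lp)
next
  case (insert a F)
  then show ?case using lp_add[of "f a" p "\<lambda>n. \<Sum>i\<in>F. f i n"] by simp
qed

lemma lp_norm_scale: "x \<in> lp p \<Longrightarrow> p > 0 \<Longrightarrow> lp_norm p (\<lambda>n. c * x n) = norm c * lp_norm p x"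
proof -
  assume x: "x \<in> lp p" and p: "p > 0"
  have "lp_powsum p (\<lambda>n. c * x n) = norm c powr p * lp_powsum p x"
    using x unfolding lp_powsum_def mem_lp_iff by (simp add: norm_mult powr_mult suminf_mult)
  then have "lp_norm p (\<lambda>n. c * x n) = (norm c powr p) powr (1/p) * lp_powsum p x powr (1/p)"
    by (simp add: lp_norm_eq_powsum_root powr_mult)
  then show ?thesis using p by (simp add: powr_powr lp_norm_eq_powsum_root)
qed

lemma lp_norm_uminus: "lp_norm p (\<lambda>n. - x n) = lp_norm p x"
  by (simp add: lp_norm_def)

lemma lp_norm_diff_commute: "lp_norm p (\<lambda>n. x n - y n) = lp_norm p (\<lambda>n. y n - x n)"
  by (simp add: lp_norm_def norm_minus_commute)

lemma norm_coord_le_lp_norm: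
  assumes x: "x \<in> lp p" and p: "p > 0"
  shows "norm (x m) \<le> lp_norm p x"
proof -
  have "(\<Sum>n\<in>{m}. norm (x n) powr p) \<le> lp_powsum p x"
    unfolding lp_powsum_def using x by (intro sum_le_suminf) (auto simp: mem_lp_iff)
  then have "norm (x m) powr p \<le> lp_norm p x powr p" using lp_norm_powr[OF x p] by simp
  then show ?thesis using p by (simp add: lp_norm_nonneg powr_le_powr_iff)
qed

lemma lp_normalize:
  fixes x :: "nat \<Rightarrow> 'a::real_normed_field"
  assumes x: "x \<in> lp p" and p: "p > 0" and nz: "lp_norm p x \<noteq> 0"
  obtains r u where "r > 0" "u \<in> lp p" "lp_norm p u = 1" "x = (\<lambda>n. of_real r * u n)"
proof
  define r where "r = lp_norm p x"
  show r: "r > 0" using nz lp_norm_nonneg[of p x] by (simp add: r_def)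
  show "(\<lambda>n. of_real (1/r) * x n) \<in> lp p" by (rule lp_scale[OF x])
  show "lp_norm p (\<lambda>n. of_real (1/r) * x n) = 1"
    using lp_norm_scale[OF x p, of "of_real (1/r)"] r by (simp add: r_def norm_divide)
  show "x = (\<lambda>n. of_real r * (of_real (1/r) * x n))"
    using r by simp
qed

lemma lp_norm_add_le:
  assumes x: "x \<in> lp p" and y: "y \<in> lp p" and p: "p \<ge> 1"
  shows "lp_norm p (\<lambda>n. x n + y n) \<le> lp_norm p x + lp_norm p y"
proof (cases "lp_norm p x = 0 \<or> lp_norm p y = 0")
  case True
  moreover have "p > 0" using p by simp
  ultimately have "x = (\<lambda>n. 0) \<or> y = (\<lambda>n. 0)"
    using lp_norm_eq_0_imp_zero[OF x] lp_norm_eq_0_imp_zero[OF y] by blast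
  then show ?thesis by (auto simp: lp_norm_zero)
next
  case False
  define A B where "A = lp_norm p x" and "B = lp_norm p y"
  have A: "A > 0" and B: "B > 0" using False lp_norm_nonneg[of p] by (auto simp: A_def B_def order_le_less)
  have p0: "p > 0" using p by simp
  have xy: "(\<lambda>n. x n + y n) \<in> lp p" using lp_add[OF x y] p by auto
  have Sx: "lp_powsum p x = A powr p" and Sy: "lp_powsum p y = B powr p"
    by (simp_all add: A_def B_def lp_norm_powr[OF x p0] lp_norm_powr[OF y p0])
  have "lp_powsum p (\<lambda>n. x n + y n) / (A + B) powr p
      = (\<Sum>n. norm (x n + y n) powr p / (A + B) powr p)"
    unfolding lp_powsum_def using xy by (simp add: mem_lp_iff suminf_divide)
  also have "\<dots> \<le> (\<Sum>n. A / (A + B) * (norm (x n) powr p / A powr p)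
                      + B / (A + B) * (norm (y n) powr p / B powr p))"
    using x y xy p A B
    by (intro suminf_le norm_add_powr_le_convex)
      (auto simp: mem_lp_iff intro!: summable_add summable_mult summable_divide)
  also have "\<dots> = A / (A + B) * (lp_powsum p x / A powr p) + B / (A + B) * (lp_powsum p y / B powr p)"
    using x y unfolding lp_powsum_def mem_lp_iff
    by (subst suminf_add[symmetric]) (auto intro!: summable_mult summable_divide simp: suminf_mult suminf_divide)
  also have "\<dots> = A / (A + B) + B / (A + B)" using Sx Sy A B by simp
  also have "\<dots> = 1" using A B by (simp add: add_divide_distrib[symmetric])
  finally have "lp_powsum p (\<lambda>n. x n + y n) \<le> (A + B) powr p" using A B by (simp add: field_simps)
  then show ?thesis using lp_powsum_le_powr_iff[OF xy p0] A B by (simp add: A_def B_def)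
qed

lemma lp_norm_triangle_ineq2:
  assumes x: "x \<in> lp p" and y: "y \<in> lp p" and p: "p \<ge> 1"
  shows "lp_norm p x - lp_norm p y \<le> lp_norm p (\<lambda>n. x n - y n)"
proof -
  have "lp_norm p x = lp_norm p (\<lambda>n. y n + (x n - y n))" by simp
  also have "\<dots> \<le> lp_norm p y + lp_norm p (\<lambda>n. x n - y n)"
    using x y p by (intro lp_norm_add_le lp_diff) auto
  finally show ?thesis by simp
qed

lemma lp_norm_diff_triangle:
  assumes x: "x \<in> lp p" and y: "y \<in> lp p" and z: "z \<in> lp p" and p: "p \<ge> 1"
  shows "lp_norm p (\<lambda>n. x n - z n) \<le> lp_norm p (\<lambda>n. x n - y n) + lp_norm p (\<lambda>n. y n - z n)"
proof -
  have "lp_norm p (\<lambda>n. x n - z n) = lp_norm p (\<lambda>n. (x n - y n) + (y n - z n))" by simp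
  also have "\<dots> \<le> lp_norm p (\<lambda>n. x n - y n) + lp_norm p (\<lambda>n. y n - z n)"
    using x y z p by (intro lp_norm_add_le lp_diff) auto
  finally show ?thesis .
qed

lemma lp_norm_sum_le:
  assumes "finite I" "\<And>i. i \<in> I \<Longrightarrow> f i \<in> lp p" "p \<ge> 1"
  shows "lp_norm p (\<lambda>n. \<Sum>i\<in>I. f i n) \<le> (\<Sum>i\<in>I. lp_norm p (f i))"
  using assms
proof (induction I rule: finite_induct)
  case empty then show ?case by (simp add: lp_norm_zero)
next
  case (insert a F)
  have F: "(\<lambda>n. \<Sum>i\<in>F. f i n) \<in> lp p" using insert by (intro lp_sum) auto
  have "lp_norm p (\<lambda>n. \<Sum>i\<in>insert a F. f i n) = lp_norm p (\<lambda>n. f a n + (\<Sum>i\<in>F. f i n))"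
    using insert by simp
  also have "\<dots> \<le> lp_norm p (f a) + lp_norm p (\<lambda>n. \<Sum>i\<in>F. f i n)"
    using insert F by (intro lp_norm_add_le) auto
  also have "\<dots> \<le> lp_norm p (f a) + (\<Sum>i\<in>F. lp_norm p (f i))"
    using insert by simp
  finally show ?case using insert by simp
qed

lemma lp_norm_mono_exponent:
  fixes x :: "nat \<Rightarrow> 'a::real_normed_field"
  assumes x: "x \<in> lp p" and p: "p > 0" and pq: "p \<le> q"
  shows "x \<in> lp q \<and> lp_norm q x \<le> lp_norm p x"
proof (cases "lp_norm p x = 0")
  case True
  then have "x = (\<lambda>n. 0)" by (rule lp_norm_eq_0_imp_zero[OF x p])
  then show ?thesis by (simp add: zero_in_lp lp_norm_zero)
next
  case False
  obtain r u where r: "r > 0" and u: "u \<in> lp p" "lp_norm p u = 1" and xu: "x = (\<lambda>n. of_real r * u n)"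
    using lp_normalize[OF x p False] .
  have q: "q > 0" using p pq by simp
  have su: "summable (\<lambda>n. norm (u n) powr p)" using u by (simp add: mem_lp_iff)
  have le: "norm (u n) powr q \<le> norm (u n) powr p" for n
    using norm_coord_le_lp_norm[OF u(1) p, of n] u(2) pq by (intro powr_mono') auto
  have uq: "u \<in> lp q"
    unfolding mem_lp_iff using le by (intro summable_comparison_test'[OF su, where N=0]) auto
  have "lp_powsum q u \<le> lp_powsum p u"
    using su uq le unfolding lp_powsum_def mem_lp_iff by (intro suminf_le) auto
  then have "lp_norm q u \<le> 1"
    using lp_norm_powr[OF u(1) p] u(2) lp_powsum_le_powr_iff[OF uq q, of 1] by simp
  moreover have "lp_norm p x = r" "lp_norm q x = r * lp_norm q u"
    unfolding xu using r u lp_norm_scale[OF u(1) p] lp_norm_scale[OF uq q] by simp_all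
  ultimately show ?thesis using r lp_scale[OF uq] xu by (simp add: mult_left_le)
qed

definition basis_seq :: "nat \<Rightarrow> nat \<Rightarrow> 'a::zero_neq_one" where
  "basis_seq n m = (if m = n then 1 else 0)"

lemma basis_seq_in_lp: "(basis_seq n :: nat \<Rightarrow> 'a::real_normed_field) \<in> lp p"
  and lp_norm_basis_seq: "lp_norm p (basis_seq n :: nat \<Rightarrow> 'a::real_normed_field) = 1"
proof -
  have "(\<lambda>m. norm (basis_seq n m :: 'a) powr p) = (\<lambda>m. if m = n then 1 else 0)"
    by (auto simp: basis_seq_def)
  moreover have "(\<lambda>m. if m = n then 1 else 0) sums (1::real)"
    using sums_single[of n "\<lambda>_. 1::real"] by simp
  ultimately show "(basis_seq n :: nat \<Rightarrow> 'a) \<in> lp p" "lp_norm p (basis_seq n :: nat \<Rightarrow> 'a) = 1"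
    by (simp_all add: mem_lp_iff lp_norm_def sums_iff)
qed

section \<open>Blocks\<close>

definition block :: "nat \<Rightarrow> nat \<Rightarrow> (nat \<Rightarrow> 'a::zero) \<Rightarrow> nat \<Rightarrow> 'a" where
  "block a b x n = (if a \<le> n \<and> n < b then x n else 0)"

lemma block_in_lp: "block a b x \<in> lp p"
  unfolding mem_lp_iff by (rule summable_finite[of "{a..<b}"]) (auto simp: block_def)

lemma lp_powsum_block_le: "x \<in> lp p \<Longrightarrow> lp_powsum p (block a b x) \<le> lp_powsum p x"
  unfolding lp_powsum_def using block_in_lp[of a b x p]
  by (intro suminf_le) (auto simp: block_def mem_lp_iff)

lemma lp_tail_tendsto_0:
  assumes "x \<in> lp p"
  shows "(\<lambda>b. \<Sum>n. norm (x (n + b)) powr p) \<longlonglongrightarrow> 0"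
proof -
  have s: "summable (\<lambda>n. norm (x n) powr p)" using assms by (simp add: mem_lp_iff)
  have "(\<lambda>b. (\<Sum>n. norm (x n) powr p) - (\<Sum>i<b. norm (x i) powr p))
          \<longlonglongrightarrow> (\<Sum>n. norm (x n) powr p) - (\<Sum>n. norm (x n) powr p)"
    by (intro tendsto_diff tendsto_const summable_LIMSEQ s)
  then show ?thesis using suminf_minus_initial_segment[OF s] by simp
qed

lemma lp_powsum_off_block_le:
  assumes x: "x \<in> lp p" and ab: "a \<le> b" and p: "p \<ge> 0"
  shows "lp_powsum p (\<lambda>n. x n - block a b x n)
    \<le> (\<Sum>n<a. norm (x n) powr p) + (\<Sum>n. norm (x (n + b)) powr p)"
proof -
  define g where "g = (\<lambda>n. norm (x n - block a b x n) powr p)"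
  have "summable g" using lp_diff[OF x block_in_lp p] by (simp add: g_def mem_lp_iff)
  then have "lp_powsum p (\<lambda>n. x n - block a b x n) = (\<Sum>n. g (n + b)) + (\<Sum>i<b. g i)"
    unfolding lp_powsum_def g_def[symmetric] by (rule suminf_split_initial_segment)
  also have "(\<lambda>n. g (n + b)) = (\<lambda>n. norm (x (n + b)) powr p)" by (simp add: g_def block_def)
  also have "(\<Sum>i<b. g i) = (\<Sum>i<a. g i)"
    using ab by (intro sum.mono_neutral_right) (auto simp: g_def block_def)
  also have "(\<Sum>i<a. g i) = (\<Sum>n<a. norm (x n) powr p)"
    by (intro sum.cong) (auto simp: g_def block_def)
  finally show ?thesis by simp
qed

lemma lp_norm_off_block_less:
  assumes x: "x \<in> lp p" and p: "p > 0" and e: "e \<ge> 0"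
    and less: "lp_powsum p (\<lambda>n. x n - block a b x n) < e powr p"
  shows "lp_norm p (\<lambda>n. x n - block a b x n) < e"
proof -
  have "(\<lambda>n. x n - block a b x n) \<in> lp p" using lp_diff[OF x block_in_lp] p by simp
  from lp_norm_less_root[OF this p less] show ?thesis using p e by (simp add: powr_powr)
qed

lemma lp_powsum_sum_blocks:
  assumes ch: "\<forall>i<N. a i \<le> a (Suc i)"
  shows "lp_powsum p (\<lambda>n. \<Sum>i<N. block (a i) (a (Suc i)) (f i) n)
       = (\<Sum>i<N. lp_powsum p (block (a i) (a (Suc i)) (f i)))"
proof -
  define B where "B i = block (a i) (a (Suc i)) (f i)" for i
  have mono: "a i \<le> a j" if "i \<le> j" "j \<le> N" for i j
    using lift_Suc_mono_le_ivl[of "{..<N}" a i j] ch that by fastforce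
  have single: "norm (\<Sum>i<N. B i n) powr p = (\<Sum>i<N. norm (B i n) powr p)" for n
  proof (cases "\<exists>i0<N. a i0 \<le> n \<and> n < a (Suc i0)")
    case True
    then obtain i0 where i0: "i0 < N" "a i0 \<le> n" "n < a (Suc i0)" by blast
    have "B i n = 0" if "i < N" "i \<noteq> i0" for i
      using mono[of "Suc i" i0] mono[of "Suc i0" i] i0 that
      by (cases "i < i0") (auto simp: B_def block_def)
    then have "(\<Sum>i<N. B i n) = B i0 n" "(\<Sum>i<N. norm (B i n) powr p) = norm (B i0 n) powr p"
      using i0 by (simp_all add: sum.mono_neutral_right[of "{..<N}" "{i0}"])
    then show ?thesis by simp
  next
    case False
    then have "B i n = 0" if "i < N" for i using that by (auto simp: B_def block_def)
    then show ?thesis by simp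
  qed
  have "lp_powsum p (\<lambda>n. \<Sum>i<N. B i n) = (\<Sum>n. \<Sum>i<N. norm (B i n) powr p)"
    unfolding lp_powsum_def using single by simp
  also have "\<dots> = (\<Sum>i<N. \<Sum>n. norm (B i n) powr p)"
    using block_in_lp by (intro suminf_sum) (auto simp: B_def mem_lp_iff)
  finally show ?thesis by (simp add: B_def lp_powsum_def)
qed

lemma lp_norm_sum_blocks_le:
  assumes ch: "\<forall>i<N. a i \<le> a (Suc i)" and p: "p > 0" and c: "c \<ge> 0"
    and f: "\<And>i. i < N \<Longrightarrow> f i \<in> lp p" and bound: "\<And>i. i < N \<Longrightarrow> lp_norm p (f i) \<le> c"
  shows "lp_norm p (\<lambda>n. \<Sum>i<N. block (a i) (a (Suc i)) (f i) n) \<le> real N powr (1/p) * c"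
proof -
  have "lp_powsum p (\<lambda>n. \<Sum>i<N. block (a i) (a (Suc i)) (f i) n) \<le> (\<Sum>i<N. c powr p)"
    unfolding lp_powsum_sum_blocks[OF ch]
  proof (rule sum_mono)
    fix i assume "i \<in> {..<N}"
    then have i: "i < N" by simp
    have "lp_powsum p (f i) \<le> c powr p" using lp_powsum_le_powr_iff[OF f[OF i] p c] bound[OF i] by simp
    then show "lp_powsum p (block (a i) (a (Suc i)) (f i)) \<le> c powr p"
      using lp_powsum_block_le[OF f[OF i], of "a i" "a (Suc i)"] by linarith
  qed
  also have "\<dots> = (real N powr (1/p) * c) powr p"
    using p c by (simp add: powr_mult powr_powr)
  finally have le: "lp_powsum p (\<lambda>n. \<Sum>i<N. block (a i) (a (Suc i)) (f i) n)
                    \<le> (real N powr (1/p) * c) powr p" .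
  have "(\<lambda>n. \<Sum>i<N. block (a i) (a (Suc i)) (f i) n) \<in> lp p"
    using p by (intro lp_sum) (auto simp: block_in_lp)
  from lp_powsum_le_powr_iff[OF this p] le p c show ?thesis by simp
qed

lemma lp_norm_sum_blocks_ge:
  assumes ch: "\<forall>i<N. a i \<le> a (Suc i)" and q: "q > 0" and c: "c \<ge> 0"
    and w: "\<And>i. i < N \<Longrightarrow> lp_norm q (block (a i) (a (Suc i)) (f i)) \<ge> c"
  shows "lp_norm q (\<lambda>n. \<Sum>i<N. block (a i) (a (Suc i)) (f i) n) \<ge> real N powr (1/q) * c"
proof -
  have "(real N powr (1/q) * c) powr q = (\<Sum>i<N. c powr q)"
    using q by (simp add: powr_mult powr_powr)
  also have "\<dots> \<le> (\<Sum>i<N. lp_powsum q (block (a i) (a (Suc i)) (f i)))"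
    using w c q by (intro sum_mono) (auto simp: lp_norm_powr[OF block_in_lp, symmetric] powr_mono2)
  also have "\<dots> = lp_norm q (\<lambda>n. \<Sum>i<N. block (a i) (a (Suc i)) (f i) n) powr q"
    using q by (simp add: lp_powsum_sum_blocks[OF ch] lp_norm_powr lp_sum block_in_lp)
  finally show ?thesis using q c by (simp add: powr_le_powr_iff lp_norm_nonneg)
qed

section \<open>Coordinatewise convergence and gliding humps\<close>

lemma tendsto_norm_powr:
  fixes f :: "nat \<Rightarrow> 'a::real_normed_vector"
  assumes "f \<longlonglongrightarrow> a" "p > 0"
  shows "(\<lambda>k. norm (f k) powr p) \<longlonglongrightarrow> norm a powr p"
  by (rule tendsto_powr2) (auto intro: tendsto_norm assms)

lemma coordwise_convergent_subseq:
  fixes X :: "nat \<Rightarrow> nat \<Rightarrow> 'a::{heine_borel,real_normed_vector}"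
  assumes bnd: "\<And>k n. norm (X k n) \<le> B"
  obtains r l where "strict_mono r" "\<forall>n. (\<lambda>k. X (r k) n) \<longlonglongrightarrow> l n"
proof -
  interpret subseqs "\<lambda>n s. convergent (\<lambda>k. X (s k) n)"
  proof
    fix n and s :: "nat \<Rightarrow> nat"
    have "bounded (range (\<lambda>k. X (s k) n))"
      using bnd by (auto simp: bounded_iff)
    then obtain l r where "strict_mono (r::nat\<Rightarrow>nat)" "((\<lambda>k. X (s k) n) \<circ> r) \<longlonglongrightarrow> l"
      using bounded_imp_convergent_subsequence by blast
    then show "\<exists>r'. strict_mono r' \<and> convergent (\<lambda>k. X ((s \<circ> r') k) n)"
      by (auto simp: convergent_def o_def)
  qed
  have conv: "convergent (\<lambda>k. X ((diagseq \<circ> (+) (Suc n)) k) n)" for n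
  proof (rule diagseq_holds)
    fix r s n assume "strict_mono (r::nat\<Rightarrow>nat)" "convergent (\<lambda>k. X (s k) n)"
    then show "convergent (\<lambda>k. X ((s \<circ> r) k) n)"
      using LIMSEQ_subseq_LIMSEQ[of "\<lambda>k. X (s k) n" _ r] by (auto simp: convergent_def o_def)
  qed
  then have "convergent (\<lambda>k. X (diagseq k) n)" for n
  proof -
    obtain L where "(\<lambda>k. X ((diagseq \<circ> (+) (Suc n)) k) n) \<longlonglongrightarrow> L"
      using conv[of n] by (auto simp: convergent_def)
    then have "(\<lambda>k. X (diagseq (k + Suc n)) n) \<longlonglongrightarrow> L" by (simp add: o_def add.commute)
    then show ?thesis
      using LIMSEQ_offset[of "\<lambda>k. X (diagseq k) n" "Suc n" L] by (auto simp: convergent_def)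
  qed
  then have "\<forall>n. \<exists>L. (\<lambda>k. X (diagseq k) n) \<longlonglongrightarrow> L" by (simp add: convergent_def)
  then obtain l where "\<forall>n. (\<lambda>k. X (diagseq k) n) \<longlonglongrightarrow> l n" by metis
  then show ?thesis using that subseq_diagseq by blast
qed

lemma lp_fatou:
  fixes z :: "nat \<Rightarrow> nat \<Rightarrow> 'a::real_normed_field"
  assumes z: "\<And>k. z k \<in> lp p" and bound: "\<And>k. lp_powsum p (z k) \<le> B"
    and lim: "\<forall>n. (\<lambda>k. z k n) \<longlonglongrightarrow> w n" and p: "p > 0"
  shows "w \<in> lp p" "lp_powsum p w \<le> B"
proof -
  have partial: "(\<Sum>n<M. norm (w n) powr p) \<le> B" for M
  proof (rule LIMSEQ_le_const2)
    show "(\<lambda>k. \<Sum>n<M. norm (z k n) powr p) \<longlonglongrightarrow> (\<Sum>n<M. norm (w n) powr p)"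
      using lim p by (intro tendsto_sum tendsto_norm_powr) auto
    have "(\<Sum>n<M. norm (z k n) powr p) \<le> lp_powsum p (z k)" for k
      unfolding lp_powsum_def using z[of k] by (intro sum_le_suminf) (auto simp: mem_lp_iff)
    then show "\<exists>N. \<forall>k\<ge>N. (\<Sum>n<M. norm (z k n) powr p) \<le> B"
      using bound order_trans by blast
  qed
  then have "summable (\<lambda>n. norm (w n) powr p)"
    by (intro summableI_nonneg_bounded[where x=B]) auto
  then show "w \<in> lp p" "lp_powsum p w \<le> B"
    using partial by (auto simp: mem_lp_iff lp_powsum_def intro!: suminf_le_const)
qed

lemma lp_powsum_diff_le_head_tail:
  assumes z: "z \<in> lp p" and x: "x \<in> lp p" and p: "p > 0"
  shows "lp_powsum p (\<lambda>n. z n - x n) \<le> (\<Sum>n<M. norm (z n - x n) powr p)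
           + 2 powr p * ((\<Sum>n. norm (z (n + M)) powr p) + (\<Sum>n. norm (x (n + M)) powr p))"
proof -
  have sz: "summable (\<lambda>n. norm (z (n + M)) powr p)" and sx: "summable (\<lambda>n. norm (x (n + M)) powr p)"
    using z x by (auto simp: mem_lp_iff intro: summable_ignore_initial_segment)
  have sd: "summable (\<lambda>n. norm (z n - x n) powr p)" using lp_diff[OF z x] p by (simp add: mem_lp_iff)
  have "(\<Sum>n. norm (z (n + M) - x (n + M)) powr p)
        \<le> (\<Sum>n. 2 powr p * (norm (z (n + M)) powr p + norm (x (n + M)) powr p))"
    using norm_add_powr_le[of p "z (n + M)" "- x (n + M)" for n] p sz sx
      summable_ignore_initial_segment[OF sd, of M]
    by (intro suminf_le summable_mult summable_add) auto
  also have "\<dots> = 2 powr p * ((\<Sum>n. norm (z (n + M)) powr p) + (\<Sum>n. norm (x (n + M)) powr p))"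
    using sz sx by (simp add: suminf_mult summable_add suminf_add)
  finally show ?thesis
    unfolding lp_powsum_def using suminf_split_initial_segment[OF sd, of M] by simp
qed

lemma radon_riesz_lp:
  fixes z :: "nat \<Rightarrow> nat \<Rightarrow> 'a::real_normed_field"
  assumes z: "\<And>k. z k \<in> lp p" and x: "x \<in> lp p" and p: "p > 0"
    and Sz: "\<And>k. lp_powsum p (z k) = 1" and Sx: "lp_powsum p x = 1"
    and lim: "\<forall>n. (\<lambda>k. z k n) \<longlonglongrightarrow> x n"
  shows "(\<lambda>k. lp_powsum p (\<lambda>n. z k n - x n)) \<longlonglongrightarrow> 0"
proof (rule order_tendstoI)
  fix a :: real assume "a < 0"
  moreover have "lp_powsum p (\<lambda>n. z k n - x n) \<ge> 0" for k
    using lp_powsum_nonneg[OF lp_diff[OF z x]] p by simp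
  ultimately show "eventually (\<lambda>k. a < lp_powsum p (\<lambda>n. z k n - x n)) sequentially"
    by (intro always_eventually allI) (rule order.strict_trans2)
next
  fix \<epsilon> :: real assume \<epsilon>: "\<epsilon> > 0"
  define \<eta> where "\<eta> = \<epsilon> / (1 + 3 * 2 powr p)"
  have den: "1 + 3 * 2 powr p > 0" by (simp add: add_pos_nonneg)
  then have \<eta>: "\<eta> > 0" using \<epsilon> by (simp add: \<eta>_def)
  obtain M where M: "(\<Sum>n. norm (x (n + M)) powr p) < \<eta>"
    using order_tendstoD(2)[OF lp_tail_tendsto_0[OF x] \<eta>] by (auto simp: eventually_sequentially)
  have tail: "(\<Sum>n. norm (y (n + M)) powr p) = lp_powsum p y - (\<Sum>n<M. norm (y n) powr p)"
    if "y \<in> lp p" for y :: "nat \<Rightarrow> 'a"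
    using suminf_split_initial_segment[of "\<lambda>n. norm (y n) powr p" M] that
    by (simp add: lp_powsum_def mem_lp_iff)
  have "(\<lambda>k. \<Sum>n<M. norm (z k n) powr p) \<longlonglongrightarrow> (\<Sum>n<M. norm (x n) powr p)"
    using lim p by (intro tendsto_sum tendsto_norm_powr) auto
  then have "eventually (\<lambda>k. (\<Sum>n<M. norm (z k n) powr p) > (\<Sum>n<M. norm (x n) powr p) - \<eta>) sequentially"
    using \<eta> by (intro order_tendstoD(1)) auto
  moreover have "(\<lambda>k. \<Sum>n<M. norm (z k n - x n) powr p) \<longlonglongrightarrow> (\<Sum>n<M. norm (x n - x n) powr p)"
    using lim p by (intro tendsto_sum tendsto_norm_powr tendsto_diff) auto
  then have "eventually (\<lambda>k. (\<Sum>n<M. norm (z k n - x n) powr p) < \<eta>) sequentially"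
    using \<eta> p by (intro order_tendstoD(2)) auto
  ultimately show "eventually (\<lambda>k. lp_powsum p (\<lambda>n. z k n - x n) < \<epsilon>) sequentially"
  proof eventually_elim
    case (elim k)
    \<comment> \<open>equal masses: as the head of \<open>z k\<close> is almost that of \<open>x\<close>, so is its tail\<close>
    have tail_z: "(\<Sum>n. norm (z k (n + M)) powr p) < 2 * \<eta>"
      using tail[OF z, of k] tail[OF x] Sz[of k] Sx M elim(1) by linarith
    have "lp_powsum p (\<lambda>n. z k n - x n) \<le> (\<Sum>n<M. norm (z k n - x n) powr p)
           + 2 powr p * ((\<Sum>n. norm (z k (n + M)) powr p) + (\<Sum>n. norm (x (n + M)) powr p))"
      by (rule lp_powsum_diff_le_head_tail[OF z x p])
    also have "\<dots> < \<eta> + 2 powr p * (2 * \<eta> + \<eta>)"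
      using elim(2) M tail_z
      by (intro add_strict_mono mult_strict_left_mono) auto
    also have "\<dots> = \<eta> * (1 + 3 * 2 powr p)" by (simp add: algebra_simps)
    also have "\<dots> = \<epsilon>" using den by (simp add: \<eta>_def)
    finally show ?case .
  qed
qed

lemma hump_step:
  fixes f g :: "nat \<Rightarrow> nat \<Rightarrow> 'a::real_normed_field"
  assumes f: "\<And>k. f k \<in> lp p" and g: "\<And>k. g k \<in> lp q" and p: "p > 0" and q: "q > 0"
    and fl: "\<forall>n. (\<lambda>k. f k n) \<longlonglongrightarrow> 0" and gl: "\<forall>n. (\<lambda>k. g k n) \<longlonglongrightarrow> 0"
    and Q: "frequently Q sequentially" and e: "e > 0"
  obtains k b where "Q k" "A \<le> b"
    "lp_powsum p (\<lambda>n. f k n - block A b (f k) n) < e"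
    "lp_powsum q (\<lambda>n. g k n - block A b (g k) n) < e"
proof -
  have "(\<lambda>k. \<Sum>n<A. norm (f k n) powr p) \<longlonglongrightarrow> (\<Sum>n<A. norm (0::'a) powr p)"
    using fl p by (intro tendsto_sum tendsto_norm_powr) auto
  then have "eventually (\<lambda>k. (\<Sum>n<A. norm (f k n) powr p) < e/2) sequentially"
    using e p by (intro order_tendstoD(2)) auto
  moreover have "(\<lambda>k. \<Sum>n<A. norm (g k n) powr q) \<longlonglongrightarrow> (\<Sum>n<A. norm (0::'a) powr q)"
    using gl q by (intro tendsto_sum tendsto_norm_powr) auto
  then have "eventually (\<lambda>k. (\<Sum>n<A. norm (g k n) powr q) < e/2) sequentially"
    using e q by (intro order_tendstoD(2)) auto
  ultimately have "eventually (\<lambda>k. (\<Sum>n<A. norm (f k n) powr p) < e/2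
                               \<and> (\<Sum>n<A. norm (g k n) powr q) < e/2) sequentially"
    by (rule eventually_conj)
  then obtain k where k: "Q k" "(\<Sum>n<A. norm (f k n) powr p) < e/2" "(\<Sum>n<A. norm (g k n) powr q) < e/2"
    using frequently_ex[OF frequently_eventually_conj[OF Q]] by blast
  have "eventually (\<lambda>b. (\<Sum>n. norm (f k (n + b)) powr p) < e/2) sequentially"
    using e by (intro order_tendstoD(2)[OF lp_tail_tendsto_0[OF f]]) auto
  moreover have "eventually (\<lambda>b. (\<Sum>n. norm (g k (n + b)) powr q) < e/2) sequentially"
    using e by (intro order_tendstoD(2)[OF lp_tail_tendsto_0[OF g]]) auto
  ultimately have "eventually (\<lambda>b. (\<Sum>n. norm (f k (n + b)) powr p) < e/2
                               \<and> (\<Sum>n. norm (g k (n + b)) powr q) < e/2) sequentially"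
    by (rule eventually_conj)
  then obtain B where B: "\<And>b. b \<ge> B \<Longrightarrow> (\<Sum>n. norm (f k (n + b)) powr p) < e/2
                                     \<and> (\<Sum>n. norm (g k (n + b)) powr q) < e/2"
    by (auto simp: eventually_sequentially)
  define b where "b = max A B"
  have Ab: "A \<le> b" by (simp add: b_def)
  have "lp_powsum p (\<lambda>n. f k n - block A b (f k) n)
        \<le> (\<Sum>n<A. norm (f k n) powr p) + (\<Sum>n. norm (f k (n + b)) powr p)"
    using p by (intro lp_powsum_off_block_le[OF f Ab]) simp
  also have "\<dots> < e" using k B[of b] by (simp add: b_def)
  finally have "lp_powsum p (\<lambda>n. f k n - block A b (f k) n) < e" .
  moreover have "lp_powsum q (\<lambda>n. g k n - block A b (g k) n)
        \<le> (\<Sum>n<A. norm (g k n) powr q) + (\<Sum>n. norm (g k (n + b)) powr q)"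
    using q by (intro lp_powsum_off_block_le[OF g Ab]) simp
  then have "lp_powsum q (\<lambda>n. g k n - block A b (g k) n) < e" using k B[of b] by (simp add: b_def)
  ultimately show ?thesis using that k(1) Ab by blast
qed

lemma gliding_hump:
  fixes f g :: "nat \<Rightarrow> nat \<Rightarrow> 'a::real_normed_field"
  assumes f: "\<And>k. f k \<in> lp p" and g: "\<And>k. g k \<in> lp q" and p: "p > 0" and q: "q > 0"
    and fl: "\<forall>n. (\<lambda>k. f k n) \<longlonglongrightarrow> 0" and gl: "\<forall>n. (\<lambda>k. g k n) \<longlonglongrightarrow> 0"
    and Q: "frequently Q sequentially" and e: "e > 0"
  shows "\<exists>ks a. \<forall>i<N. a i \<le> a (Suc i) \<and> Q (ks i) \<and>
       lp_powsum p (\<lambda>n. f (ks i) n - block (a i) (a (Suc i)) (f (ks i)) n) < e \<and>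
       lp_powsum q (\<lambda>n. g (ks i) n - block (a i) (a (Suc i)) (g (ks i)) n) < e"
proof (induction N)
  case 0 show ?case by simp
next
  case (Suc N)
  then obtain ks a where IH: "\<forall>i<N. a i \<le> a (Suc i) \<and> Q (ks i) \<and>
       lp_powsum p (\<lambda>n. f (ks i) n - block (a i) (a (Suc i)) (f (ks i)) n) < e \<and>
       lp_powsum q (\<lambda>n. g (ks i) n - block (a i) (a (Suc i)) (g (ks i)) n) < e" by blast
  obtain k b where "Q k" "a N \<le> b"
    "lp_powsum p (\<lambda>n. f k n - block (a N) b (f k) n) < e"
    "lp_powsum q (\<lambda>n. g k n - block (a N) b (g k) n) < e"
    using hump_step[OF f g p q fl gl Q e] .
  then show ?case
    using IH by (intro exI[of _ "ks(N := k)"] exI[of _ "a(Suc N := b)"]) (auto simp: less_Suc_eq)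
qed

lemma exists_nat_powr_dominates:
  fixes \<alpha> \<beta> c :: real
  assumes "0 \<le> \<beta>" "\<beta> < \<alpha>" "c > 0"
  obtains N :: nat where "N \<ge> 1" "real N powr \<alpha> * c > 2 * real N powr \<beta> + 2"
proof -
  define t where "t = \<alpha> - \<beta>"
  have t: "t > 0" using assms by (simp add: t_def)
  define N where "N = nat \<lceil>(4/c) powr (1/t)\<rceil> + 1"
  have N1: "N \<ge> 1" by (simp add: N_def)
  have "real N > (4/c) powr (1/t)" unfolding N_def by linarith
  then have "real N powr t > ((4/c) powr (1/t)) powr t"
    using t by (intro powr_less_mono2) auto
  also have "((4/c) powr (1/t)) powr t = 4/c" using t assms by (simp add: powr_powr)
  finally have Nt: "real N powr t * c > 4" using assms by (simp add: field_simps)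
  have Nb: "real N powr \<beta> \<ge> 1" using N1 assms by (intro ge_one_powr_ge_zero) auto
  have "real N powr \<alpha> * c = (real N powr t * c) * real N powr \<beta>"
    by (simp add: t_def powr_add[symmetric])
  also have "\<dots> > 4 * real N powr \<beta>" using Nt Nb N1 by (intro mult_strict_right_mono) auto
  finally show ?thesis using N1 Nb that by auto
qed

section \<open>Operators of norm one from \<open>\<ell>\<^sub>p\<close> to \<open>\<ell>\<^sub>q\<close>\<close>

locale norm_one_op =
  fixes p q :: real and T :: "(nat \<Rightarrow> 'a::real_normed_field) \<Rightarrow> (nat \<Rightarrow> 'a)"
  assumes bounded: "bounded_op p q T" and norm_one: "op_norm p q T = 1"
    and p1: "p \<ge> 1" and q1: "q \<ge> 1"
begin

lemma p_pos: "p > 0" and q_pos: "q > 0"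
  using p1 q1 by auto

lemma T_in_lp: "x \<in> lp p \<Longrightarrow> T x \<in> lp q"
  using bounded by (simp add: bounded_op_def)

lemma T_add: "x \<in> lp p \<Longrightarrow> y \<in> lp p \<Longrightarrow> T (\<lambda>n. x n + y n) = (\<lambda>n. T x n + T y n)"
  using bounded by (simp add: bounded_op_def)

lemma T_scale: "x \<in> lp p \<Longrightarrow> T (\<lambda>n. c * x n) = (\<lambda>n. c * T x n)"
  using bounded by (simp add: bounded_op_def)

lemma T_zero: "T (\<lambda>n. 0) = (\<lambda>n. 0)"
  using T_scale[OF zero_in_lp, of 0] by simp

lemma T_diff: "x \<in> lp p \<Longrightarrow> y \<in> lp p \<Longrightarrow> T (\<lambda>n. x n - y n) = (\<lambda>n. T x n - T y n)"
  using T_add[OF _ lp_scale, of x y "-1"] T_scale[of y "-1"] by simp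

lemma T_sum:
  "finite I \<Longrightarrow> (\<And>i. i \<in> I \<Longrightarrow> f i \<in> lp p) \<Longrightarrow> T (\<lambda>n. \<Sum>i\<in>I. f i n) = (\<lambda>n. \<Sum>i\<in>I. T (f i) n)"
proof (induction I rule: finite_induct)
  case empty then show ?case by (simp add: T_zero)
next
  case (insert a F)
  have "(\<lambda>n. \<Sum>i\<in>F. f i n) \<in> lp p" using insert p_pos by (intro lp_sum) auto
  then show ?case using insert T_add[of "f a" "\<lambda>n. \<Sum>i\<in>F. f i n"] by simp
qed

lemma T_norm_le: "x \<in> lp p \<Longrightarrow> lp_norm q (T x) \<le> lp_norm p x"
proof (cases "lp_norm p x = 0")
  case True
  assume x: "x \<in> lp p"
  then have "x = (\<lambda>n. 0)" using True by (rule lp_norm_eq_0_imp_zero[OF _ p_pos])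
  then show ?thesis by (simp add: T_zero lp_norm_zero)
next
  case False
  assume x: "x \<in> lp p"
  obtain r u where r: "r > 0" and u: "u \<in> lp p" "lp_norm p u = 1" and xu: "x = (\<lambda>n. of_real r * u n)"
    using lp_normalize[OF x p_pos False] .
  obtain C where "\<forall>x\<in>lp p. lp_norm q (T x) \<le> C * lp_norm p x"
    using bounded by (auto simp: bounded_op_def)
  then have "bdd_above {lp_norm q (T x) | x. x \<in> lp p \<and> lp_norm p x = 1}"
    unfolding bdd_above_def by (intro exI[of _ C]) auto
  then have "lp_norm q (T u) \<le> op_norm p q T"
    unfolding op_norm_def using u by (intro cSup_upper) auto
  then have "lp_norm q (T u) \<le> 1" using norm_one by simp
  moreover have "lp_norm p x = r" "lp_norm q (T x) = r * lp_norm q (T u)"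
    unfolding xu using r u lp_norm_scale[OF u(1) p_pos] T_scale[OF u(1)]
      lp_norm_scale[OF T_in_lp[OF u(1)] q_pos] by simp_all
  ultimately show ?thesis using r by (simp add: mult_left_le)
qed

lemma T_norm_diff_le:
  assumes x: "x \<in> lp p" and y: "y \<in> lp p"
  shows "lp_norm q (\<lambda>m. T x m - T y m) \<le> lp_norm p (\<lambda>n. x n - y n)"
proof -
  have "(\<lambda>n. x n - y n) \<in> lp p" using lp_diff[OF x y] p_pos by simp
  from T_norm_le[OF this] show ?thesis by (simp add: T_diff[OF x y])
qed

lemma T_coord_diff_le:
  assumes x: "x \<in> lp p" and y: "y \<in> lp p"
  shows "norm (T x m - T y m) \<le> lp_norm p (\<lambda>n. x n - y n)"
proof -
  have xy: "(\<lambda>n. x n - y n) \<in> lp p" using lp_diff[OF x y] p_pos by simp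
  have "norm (T x m - T y m) = norm (T (\<lambda>n. x n - y n) m)" by (simp add: T_diff[OF x y])
  also have "\<dots> \<le> lp_norm q (T (\<lambda>n. x n - y n))" by (rule norm_coord_le_lp_norm[OF T_in_lp[OF xy] q_pos])
  also have "\<dots> \<le> lp_norm p (\<lambda>n. x n - y n)" by (rule T_norm_le[OF xy])
  finally show ?thesis .
qed

lemma humps_image_coord_bound:
  assumes ch: "\<forall>i<N. a i \<le> a (Suc i)" and d: "\<And>k. d k \<in> lp p" and d2: "\<And>k. lp_norm p (d k) \<le> 2"
    and near: "\<And>i. i < N \<Longrightarrow> lp_norm p (\<lambda>n. d (ks i) n - block (a i) (a (Suc i)) (d (ks i)) n) \<le> m"
  shows "norm (\<Sum>i<N. T (d (ks i)) j) \<le> 2 * real N powr (1/p) + real N * m"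
proof -
  define b where "b i = block (a i) (a (Suc i)) (d (ks i))" for i
  define D where "D = (\<lambda>n. \<Sum>i<N. b i n)"
  have b: "b i \<in> lp p" for i by (simp add: b_def block_in_lp)
  have D: "D \<in> lp p" unfolding D_def using p_pos b by (intro lp_sum) auto
  have "norm (\<Sum>i<N. T (d (ks i)) j) = norm ((\<Sum>i<N. T (d (ks i)) j - T (b i) j) + T D j)"
    unfolding D_def by (simp add: T_sum b sum_subtractf)
  also have "\<dots> \<le> (\<Sum>i<N. norm (T (d (ks i)) j - T (b i) j)) + norm (T D j)"
    by (intro order_trans[OF norm_triangle_ineq] add_right_mono norm_sum)
  also have "(\<Sum>i<N. norm (T (d (ks i)) j - T (b i) j)) \<le> (\<Sum>i<N. m)"
  proof (rule sum_mono)
    fix i assume "i \<in> {..<N}"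
    then show "norm (T (d (ks i)) j - T (b i) j) \<le> m"
      using near[of i] by (intro order_trans[OF T_coord_diff_le[OF d b]]) (simp add: b_def)
  qed
  also have "norm (T D j) \<le> lp_norm q (T D)" by (rule norm_coord_le_lp_norm[OF T_in_lp[OF D] q_pos])
  also have "\<dots> \<le> lp_norm p D" by (rule T_norm_le[OF D])
  also have "\<dots> \<le> real N powr (1/p) * 2"
    unfolding D_def b_def using d d2 by (intro lp_norm_sum_blocks_le[OF ch p_pos]) auto
  finally show ?thesis by simp
qed

lemma image_coord_limit_eq_0:
  assumes p1': "p > 1"
    and d: "\<And>k. d k \<in> lp p" and d2: "\<And>k. lp_norm p (d k) \<le> 2"
    and dl: "\<forall>n. (\<lambda>k. d k n) \<longlonglongrightarrow> 0" and vl: "(\<lambda>k. T (d k) j) \<longlonglongrightarrow> v"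
  shows "v = 0"
proof (rule ccontr)
  assume "v \<noteq> 0"
  define c where "c = norm v"
  have c: "c > 0" using \<open>v \<noteq> 0\<close> by (simp add: c_def)
  have "eventually (\<lambda>k. norm (T (d k) j - v) < c/2) sequentially"
    using c vl[unfolded tendsto_iff dist_norm, rule_format, of "c/2"] by simp
  then have close: "frequently (\<lambda>k. norm (T (d k) j - v) < c/2) sequentially"
    by (simp add: eventually_frequently)
  obtain N :: nat where N1: "N \<ge> 1" and N: "real N powr 1 * (c/4) > 2 * real N powr (1/p) + 2"
    using exists_nat_powr_dominates[of "1/p" 1 "c/4"] p1' c by auto
  obtain ks a where H: "\<forall>i<N. a i \<le> a (Suc i) \<and> norm (T (d (ks i)) j - v) < c/2 \<and>
       lp_powsum p (\<lambda>n. d (ks i) n - block (a i) (a (Suc i)) (d (ks i)) n) < (c/4) powr p"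
    using gliding_hump[OF d d p_pos p_pos dl dl close, of "(c/4) powr p" N] c by auto
  have ch: "\<forall>i<N. a i \<le> a (Suc i)" using H by blast
  have "lp_norm p (\<lambda>n. d (ks i) n - block (a i) (a (Suc i)) (d (ks i)) n) \<le> c/4" if "i < N" for i
    using H that c by (intro less_imp_le lp_norm_off_block_less[OF d p_pos]) auto
  then have up: "norm (\<Sum>i<N. T (d (ks i)) j) \<le> 2 * real N powr (1/p) + real N * (c/4)"
    by (rule humps_image_coord_bound[OF ch d d2])
  have "real N * c = norm (\<Sum>i<N. v)" by (simp add: c_def norm_mult)
  also have "\<dots> = norm ((\<Sum>i<N. T (d (ks i)) j) - (\<Sum>i<N. T (d (ks i)) j - v))"
    by (simp add: sum_subtractf)
  also have "\<dots> \<le> norm (\<Sum>i<N. T (d (ks i)) j) + (\<Sum>i<N. norm (T (d (ks i)) j - v))"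
    by (intro order_trans[OF norm_triangle_ineq4] add_left_mono norm_sum)
  also have "(\<Sum>i<N. norm (T (d (ks i)) j - v)) \<le> (\<Sum>i<N. c/2)" using H by (intro sum_mono) auto
  finally have "real N * c \<le> norm (\<Sum>i<N. T (d (ks i)) j) + real N * (c/2)" by simp
  with up have "real N * (c/4) \<le> 2 * real N powr (1/p)" by (simp add: algebra_simps)
  then show False using N N1 by simp
qed

lemma humps_image_norm_bound:
  assumes ch: "\<forall>i<N. a i \<le> a (Suc i)" and d: "\<And>k. d k \<in> lp p" and d2: "\<And>k. lp_norm p (d k) \<le> 2"
    and big: "\<And>i. i < N \<Longrightarrow> \<delta> \<le> lp_norm q (T (d (ks i)))"
    and near: "\<And>i. i < N \<Longrightarrow> lp_norm p (\<lambda>n. d (ks i) n - block (a i) (a (Suc i)) (d (ks i)) n) \<le> m"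
    and near': "\<And>i. i < N \<Longrightarrow>
       lp_norm q (\<lambda>n. T (d (ks i)) n - block (a i) (a (Suc i)) (T (d (ks i))) n) \<le> m"
    and m\<delta>: "m \<le> \<delta>"
  shows "real N powr (1/q) * (\<delta> - m) \<le> 2 * real N powr (1/p) + real N * (2 * m)"
proof -
  define b where "b i = block (a i) (a (Suc i)) (d (ks i))" for i
  define w where "w i = block (a i) (a (Suc i)) (T (d (ks i)))" for i
  define D where "D = (\<lambda>n. \<Sum>i<N. b i n)"
  define W where "W = (\<lambda>n. \<Sum>i<N. w i n)"
  have b: "b i \<in> lp p" and w: "w i \<in> lp q" and Td: "T (d k) \<in> lp q" for i k
    by (simp_all add: b_def w_def block_in_lp T_in_lp[OF d])
  have D: "D \<in> lp p" and W: "W \<in> lp q"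
    unfolding D_def W_def using p_pos q_pos b w by (auto intro: lp_sum)
  have "real N powr (1/q) * (\<delta> - m) \<le> lp_norm q W"
    unfolding W_def w_def
  proof (rule lp_norm_sum_blocks_ge[OF ch q_pos])
    show "0 \<le> \<delta> - m" using m\<delta> by simp
    fix i assume i: "i < N"
    show "\<delta> - m \<le> lp_norm q (block (a i) (a (Suc i)) (T (d (ks i))))"
      using big[OF i] near'[OF i] lp_norm_triangle_ineq2[OF Td[of "ks i"] w[of i] q1] by (simp add: w_def)
  qed
  also have "lp_norm q W \<le> lp_norm q (T D) + lp_norm q (\<lambda>n. W n - T D n)"
    using lp_norm_triangle_ineq2[OF W T_in_lp[OF D] q1] by simp
  also have "lp_norm q (T D) \<le> real N powr (1/p) * 2"
  proof -
    have "lp_norm p D \<le> real N powr (1/p) * 2"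
      unfolding D_def b_def using d d2 by (intro lp_norm_sum_blocks_le[OF ch p_pos]) auto
    then show ?thesis using T_norm_le[OF D] by simp
  qed
  also have "lp_norm q (\<lambda>n. W n - T D n) \<le> (\<Sum>i<N. lp_norm q (\<lambda>n. w i n - T (b i) n))"
  proof -
    have "(\<lambda>n. W n - T D n) = (\<lambda>n. \<Sum>i<N. w i n - T (b i) n)"
      unfolding W_def D_def by (simp add: T_sum b sum_subtractf)
    moreover have "(\<lambda>n. w i n - T (b i) n) \<in> lp q" for i
      using lp_diff[OF w T_in_lp[OF b]] q_pos by simp
    ultimately show ?thesis using q1 by (simp add: lp_norm_sum_le)
  qed
  also have "\<dots> \<le> (\<Sum>i<N. 2 * m)"
  proof (rule sum_mono)
    fix i assume "i \<in> {..<N}"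
    then have i: "i < N" by simp
    have "lp_norm q (\<lambda>n. T (d (ks i)) n - T (b i) n) \<le> m"
      using near[OF i] by (intro order_trans[OF T_norm_diff_le[OF d b]]) (simp add: b_def)
    then show "lp_norm q (\<lambda>n. w i n - T (b i) n) \<le> 2 * m"
      using lp_norm_diff_triangle[OF w[of i] Td[of "ks i"] T_in_lp[OF b[of i]] q1] near'[OF i]
        lp_norm_diff_commute[of q "w i" "T (d (ks i))"]
      by (simp add: w_def)
  qed
  finally show ?thesis by simp
qed

lemma image_norm_tendsto_0:
  assumes qp: "q < p"
    and d: "\<And>k. d k \<in> lp p" and d2: "\<And>k. lp_norm p (d k) \<le> 2"
    and dl: "\<forall>n. (\<lambda>k. d k n) \<longlonglongrightarrow> 0" and Tdl: "\<forall>j. (\<lambda>k. T (d k) j) \<longlonglongrightarrow> 0"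
  shows "(\<lambda>k. lp_norm q (T (d k))) \<longlonglongrightarrow> 0"
proof (rule ccontr)
  assume "\<not> (\<lambda>k. lp_norm q (T (d k))) \<longlonglongrightarrow> 0"
  then obtain \<delta> where \<delta>: "\<delta> > 0"
    and "\<not> eventually (\<lambda>k. dist (lp_norm q (T (d k))) 0 < \<delta>) sequentially"
    unfolding tendsto_iff by blast
  then have big: "frequently (\<lambda>k. \<delta> \<le> lp_norm q (T (d k))) sequentially"
    by (simp add: not_eventually not_less lp_norm_nonneg)
  obtain N :: nat where N1: "N \<ge> 1" and N: "real N powr (1/q) * (\<delta>/2) > 2 * real N powr (1/p) + 2"
    using exists_nat_powr_dominates[of "1/p" "1/q" "\<delta>/2"] qp q1 \<delta> by (auto simp: divide_strict_left_mono)
  \<comment> \<open>the error allowed per hump: the \<open>N\<close> errors add up to at most \<open>2\<close>\<close>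
  define m where "m = min (\<delta>/2) (1 / real N)"
  have m: "m > 0" "m \<le> \<delta>/2" "m \<le> 1 / real N"
    using \<delta> N1 by (auto simp: m_def)
  have "1 / real N \<le> 1" using N1 by simp
  then have m1: "m \<le> 1" using m(3) by linarith
  have mN: "real N * m \<le> 1" using m(3) N1 by (simp add: field_simps)
  have Td: "T (d k) \<in> lp q" for k by (rule T_in_lp[OF d])
  obtain ks a where H: "\<forall>i<N. a i \<le> a (Suc i) \<and> \<delta> \<le> lp_norm q (T (d (ks i))) \<and>
       lp_powsum p (\<lambda>n. d (ks i) n - block (a i) (a (Suc i)) (d (ks i)) n) < m powr p \<and>
       lp_powsum q (\<lambda>n. T (d (ks i)) n - block (a i) (a (Suc i)) (T (d (ks i))) n) < m powr p"
    using gliding_hump[OF d Td p_pos q_pos dl Tdl big, of "m powr p" N] m by auto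
  have ch: "\<forall>i<N. a i \<le> a (Suc i)" using H by blast
  have "m powr p \<le> m powr q" using m m1 qp by (intro powr_mono') auto
  then have near': "lp_norm q (\<lambda>n. T (d (ks i)) n - block (a i) (a (Suc i)) (T (d (ks i))) n) \<le> m"
    if "i < N" for i
    using H that m by (intro less_imp_le lp_norm_off_block_less[OF Td q_pos]) auto
  have near: "lp_norm p (\<lambda>n. d (ks i) n - block (a i) (a (Suc i)) (d (ks i)) n) \<le> m" if "i < N" for i
    using H that m by (intro less_imp_le lp_norm_off_block_less[OF d p_pos]) auto
  have "real N powr (1/q) * (\<delta> - m) \<le> 2 * real N powr (1/p) + real N * (2 * m)"
    using H m by (intro humps_image_norm_bound[where d=d and ks=ks and a=a, OF ch d d2 _ near near']) auto
  moreover have "real N powr (1/q) * (\<delta>/2) \<le> real N powr (1/q) * (\<delta> - m)"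
    using m by (intro mult_left_mono) auto
  ultimately show False using N mN by linarith
qed

lemma norming_seq_defect_vanishes:
  assumes qp: "q < p"
    and X: "\<And>k. X k \<in> lp p" and Xn: "\<And>k. lp_norm p (X k) \<le> 1"
    and xl: "\<forall>n. (\<lambda>k. X k n) \<longlonglongrightarrow> x n" and yl: "\<forall>j. (\<lambda>k. T (X k) j) \<longlonglongrightarrow> y j"
  shows "x \<in> lp p" "lp_norm p x \<le> 1" "(\<lambda>k. lp_norm q (T (\<lambda>n. X k n - x n))) \<longlonglongrightarrow> 0"
proof -
  have "lp_powsum p (X k) \<le> 1" for k using lp_powsum_le_powr_iff[OF X p_pos, of 1] Xn by simp
  from lp_fatou[OF X this xl p_pos] show x: "x \<in> lp p" and xn: "lp_norm p x \<le> 1"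
    using lp_powsum_le_powr_iff[of x p 1] p_pos by auto
  define d where "d k = (\<lambda>n. X k n - x n)" for k
  have d: "d k \<in> lp p" for k unfolding d_def using lp_diff[OF X x] p_pos by simp
  have d2: "lp_norm p (d k) \<le> 2" for k
    using lp_norm_diff_triangle[OF X zero_in_lp x p1, of k] Xn[of k] xn
    by (simp add: d_def lp_norm_uminus)
  have dl: "\<forall>n. (\<lambda>k. d k n) \<longlonglongrightarrow> 0"
    using xl tendsto_diff[OF _ tendsto_const, of "\<lambda>k. X k n" "x n" sequentially "x n" for n]
    by (simp add: d_def)
  have "(\<lambda>k. T (d k) j) \<longlonglongrightarrow> y j - T x j" for j
    using yl tendsto_diff[OF _ tendsto_const, of "\<lambda>k. T (X k) j" "y j" sequentially "T x j"]
    by (simp add: d_def T_diff[OF X x])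
  moreover have "y j - T x j = 0" for j
    using qp q1 by (intro image_coord_limit_eq_0[OF _ d d2 dl calculation]) auto
  ultimately have "\<forall>j. (\<lambda>k. T (d k) j) \<longlonglongrightarrow> 0" by simp
  from image_norm_tendsto_0[OF qp d d2 dl this]
  show "(\<lambda>k. lp_norm q (T (\<lambda>n. X k n - x n))) \<longlonglongrightarrow> 0" by (simp add: d_def)
qed

lemma norming_seq_converges:
  assumes qp: "q < p"
    and X: "\<And>k. X k \<in> lp p" and Xn: "\<And>k. lp_norm p (X k) = 1"
    and TX: "(\<lambda>k. lp_norm q (T (X k))) \<longlonglongrightarrow> 1"
    and xl: "\<forall>n. (\<lambda>k. X k n) \<longlonglongrightarrow> x n" and yl: "\<forall>j. (\<lambda>k. T (X k) j) \<longlonglongrightarrow> y j"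
  shows "x \<in> lp p" "lp_norm p x = 1" "lp_norm q (T x) = 1"
    "(\<lambda>k. lp_norm p (\<lambda>n. X k n - x n)) \<longlonglongrightarrow> 0"
proof -
  have x: "x \<in> lp p" and xn: "lp_norm p x \<le> 1"
    and defect: "(\<lambda>k. lp_norm q (T (\<lambda>n. X k n - x n))) \<longlonglongrightarrow> 0"
    using norming_seq_defect_vanishes[OF qp X _ xl yl] Xn by auto
  then show "x \<in> lp p" by simp
  have "lp_norm q (T (X k)) - lp_norm q (T x) \<le> lp_norm q (T (\<lambda>n. X k n - x n))" for k
    using lp_norm_triangle_ineq2[OF T_in_lp[OF X] T_in_lp[OF x] q1] by (simp add: T_diff[OF X x])
  moreover have "(\<lambda>k. lp_norm q (T (X k)) - lp_norm q (T x)) \<longlonglongrightarrow> 1 - lp_norm q (T x)"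
    by (intro tendsto_diff TX tendsto_const)
  ultimately have "1 - lp_norm q (T x) \<le> 0"
    using defect by (intro LIMSEQ_le) auto
  with T_norm_le[OF x] xn show xn1: "lp_norm p x = 1" and "lp_norm q (T x) = 1" by auto
  have SX: "lp_powsum p (X k) = 1" for k using lp_norm_powr[OF X p_pos, of k] Xn by simp
  have "(\<lambda>k. lp_powsum p (\<lambda>n. X k n - x n)) \<longlonglongrightarrow> 0"
    using lp_norm_powr[OF x p_pos] xn1 by (intro radon_riesz_lp[OF X x p_pos SX _ xl]) simp
  moreover have "\<forall>\<^sub>F k in sequentially. 0 \<le> lp_powsum p (\<lambda>n. X k n - x n)"
    using lp_powsum_nonneg[OF lp_diff[OF X x]] p_pos by (intro always_eventually allI) simp
  ultimately have "(\<lambda>k. lp_powsum p (\<lambda>n. X k n - x n) powr (1/p)) \<longlonglongrightarrow> 0"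
    using p_pos by (intro tendsto_zero_powrI[OF _ tendsto_const]) auto
  then show "(\<lambda>k. lp_norm p (\<lambda>n. X k n - x n)) \<longlonglongrightarrow> 0"
    by (simp add: lp_norm_eq_powsum_root)
qed

end

lemma coordwise_convergent_subseq_pair:
  fixes X Y :: "nat \<Rightarrow> nat \<Rightarrow> 'a::{heine_borel,real_normed_vector}"
  assumes "\<And>k n. norm (X k n) \<le> B" "\<And>k n. norm (Y k n) \<le> B"
  obtains r x y where "strict_mono r"
    "\<forall>n. (\<lambda>k. X (r k) n) \<longlonglongrightarrow> x n" "\<forall>n. (\<lambda>k. Y (r k) n) \<longlonglongrightarrow> y n"
proof -
  define Z where "Z k n = (if even n then X k (n div 2) else Y k (n div 2))" for k n
  have "norm (Z k n) \<le> B" for k n using assms by (simp add: Z_def)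
  then obtain r l where r: "strict_mono r" and l: "\<forall>n. (\<lambda>k. Z (r k) n) \<longlonglongrightarrow> l n"
    by (rule coordwise_convergent_subseq)
  have "(\<lambda>k. X (r k) n) \<longlonglongrightarrow> l (2 * n)" "(\<lambda>k. Y (r k) n) \<longlonglongrightarrow> l (2 * n + 1)" for n
    using l[rule_format, of "2 * n"] l[rule_format, of "2 * n + 1"] by (simp_all add: Z_def)
  then show ?thesis by (intro that[OF r, of "\<lambda>n. l (2 * n)" "\<lambda>n. l (2 * n + 1)"]) auto
qed

lemma norming_seq_convergent_subseq:
  fixes T :: "(nat \<Rightarrow> 'a::{real_normed_field,heine_borel}) \<Rightarrow> (nat \<Rightarrow> 'a)"
  assumes T: "norm_one_op p q T" and qp: "q < p"
    and X: "\<And>k. X k \<in> lp p" and Xn: "\<And>k. lp_norm p (X k) = 1"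
    and TX: "(\<lambda>k. lp_norm q (T (X k))) \<longlonglongrightarrow> 1"
  obtains r x where "x \<in> lp p" "lp_norm p x = 1" "lp_norm q (T x) = 1"
    "(\<lambda>k. lp_norm p (\<lambda>n. X (r k) n - x n)) \<longlonglongrightarrow> 0"
proof -
  interpret norm_one_op p q T by (fact T)
  have "norm (X k n) \<le> 1" for k n using norm_coord_le_lp_norm[OF X p_pos, of k n] Xn[of k] by simp
  moreover have "norm (T (X k) n) \<le> 1" for k n
    using norm_coord_le_lp_norm[OF T_in_lp[OF X] q_pos, of k n] T_norm_le[OF X, of k] Xn[of k]
    by simp
  ultimately obtain r x y where r: "strict_mono r"
    and xl: "\<forall>n. (\<lambda>k. X (r k) n) \<longlonglongrightarrow> x n" and yl: "\<forall>n. (\<lambda>k. T (X (r k)) n) \<longlonglongrightarrow> y n"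
    by (rule coordwise_convergent_subseq_pair)
  from LIMSEQ_subseq_LIMSEQ[OF TX r]
  have "(\<lambda>k. lp_norm q (T (X (r k)))) \<longlonglongrightarrow> 1" by (simp add: o_def)
  from norming_seq_converges[OF qp X Xn this xl yl] show ?thesis by (rule that)
qed

lemma exists_seq_tendsto_upper_bound:
  fixes f :: "'b \<Rightarrow> real"
  assumes approx: "\<And>\<eta>. \<eta> > 0 \<Longrightarrow> \<exists>x. P x \<and> f x > 1 - \<eta>" and bound: "\<And>x. P x \<Longrightarrow> f x \<le> 1"
  shows "\<exists>X. (\<forall>k. P (X k)) \<and> (\<lambda>k. f (X k)) \<longlonglongrightarrow> 1"
proof -
  have "\<forall>k. \<exists>x. P x \<and> f x > 1 - 1 / real (Suc k)" using approx by simp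
  then obtain X where "\<forall>k. P (X k) \<and> f (X k) > 1 - 1 / real (Suc k)"
    by (rule exE[OF choice])
  then have X: "\<And>k. P (X k)" and fX: "\<And>k. f (X k) > 1 - 1 / real (Suc k)" by blast+
  have "(\<lambda>k. 1 / real (Suc k)) \<longlonglongrightarrow> 0"
    using LIMSEQ_Suc[OF lim_const_over_n[of 1]] by simp
  then have lower: "(\<lambda>k. 1 - 1 / real (Suc k)) \<longlonglongrightarrow> 1"
    using tendsto_diff[OF tendsto_const, of "\<lambda>k. 1 / real (Suc k)" 0 sequentially 1] by simp
  have "\<forall>k. 1 - 1 / real (Suc k) \<le> f (X k)" using fX by (simp add: less_imp_le)
  moreover have "\<forall>k. f (X k) \<le> 1" using bound X by blast
  ultimately have "(\<lambda>k. f (X k)) \<longlonglongrightarrow> 1"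
    by (intro tendsto_sandwich[OF _ _ lower tendsto_const] always_eventually)
  with X show ?thesis by blast
qed

lemma sBPBp_if_less:
  assumes q1: "1 \<le> q" and qp: "q < p"
  shows "sBPBp TYPE('a::{real_normed_field,heine_borel}) p q"
  unfolding sBPBp_def
proof (intro allI impI)
  fix \<epsilon> :: real and T :: "(nat \<Rightarrow> 'a) \<Rightarrow> (nat \<Rightarrow> 'a)"
  assume \<epsilon>: "\<epsilon> > 0" and "bounded_op p q T \<and> op_norm p q T = 1"
  then have T: "norm_one_op p q T" using q1 qp by unfold_locales auto
  then interpret norm_one_op p q T .
  define close where "close x0 \<longleftrightarrow> (\<exists>x1\<in>lp p. lp_norm p x1 = 1 \<and> lp_norm q (T x1) = 1 \<and>
      lp_norm p (\<lambda>n. x1 n - x0 n) < \<epsilon>)" for x0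
  define far where "far x0 \<longleftrightarrow> x0 \<in> lp p \<and> lp_norm p x0 = 1 \<and> \<not> close x0" for x0
  show "\<exists>\<eta>>0. \<forall>x0\<in>lp p. lp_norm p x0 = 1 \<and> lp_norm q (T x0) > 1 - \<eta> \<longrightarrow> close x0"
  proof (rule ccontr)
    assume "\<not> ?thesis"
    then have "\<exists>x0. far x0 \<and> lp_norm q (T x0) > 1 - \<eta>" if "\<eta> > 0" for \<eta>
      using that by (auto simp: far_def)
    moreover have "lp_norm q (T x0) \<le> 1" if "far x0" for x0
      using that T_norm_le by (fastforce simp: far_def)
    ultimately have "\<exists>X. (\<forall>k. far (X k)) \<and> (\<lambda>k. lp_norm q (T (X k))) \<longlonglongrightarrow> 1"
      by (rule exists_seq_tendsto_upper_bound[of far "\<lambda>x0. lp_norm q (T x0)"])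
    then obtain X where "\<forall>k. far (X k)" and TX: "(\<lambda>k. lp_norm q (T (X k))) \<longlonglongrightarrow> 1"
      by blast
    then have X: "\<And>k. X k \<in> lp p" "\<And>k. lp_norm p (X k) = 1" and not_close: "\<And>k. \<not> close (X k)"
      by (auto simp: far_def)
    obtain r x where x: "x \<in> lp p" "lp_norm p x = 1" "lp_norm q (T x) = 1"
      and "(\<lambda>k. lp_norm p (\<lambda>n. X (r k) n - x n)) \<longlonglongrightarrow> 0"
      using norming_seq_convergent_subseq[where X=X, OF T qp X TX] by blast
    then have "eventually (\<lambda>k. lp_norm p (\<lambda>n. X (r k) n - x n) < \<epsilon>) sequentially"
      using \<epsilon> by (intro order_tendstoD(2))
    then obtain k where "lp_norm p (\<lambda>n. X (r k) n - x n) < \<epsilon>"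
      using eventually_happens'[OF sequentially_bot] by blast
    then have "lp_norm p (\<lambda>n. x n - X (r k) n) < \<epsilon>"
      using lp_norm_diff_commute[of p x "X (r k)"] by simp
    then have "close (X (r k))" unfolding close_def using x by blast
    then show False using not_close by blast
  qed
qed

section \<open>An operator of norm one that attains its norm nowhere\<close>

definition shrink_weight :: "nat \<Rightarrow> real" where
  "shrink_weight n = real (Suc n) / real (Suc (Suc n))"

definition shrink :: "(nat \<Rightarrow> 'a::real_normed_field) \<Rightarrow> nat \<Rightarrow> 'a" where
  "shrink x = (\<lambda>n. of_real (shrink_weight n) * x n)"

lemma shrink_weight_pos: "0 < shrink_weight n"
  and shrink_weight_less_1: "shrink_weight n < 1"
  by (auto simp: shrink_weight_def)

lemma shrink_weight_tendsto_1: "shrink_weight \<longlonglongrightarrow> 1"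
proof -
  have "(\<lambda>n. 1 - 1 / real (Suc (Suc n))) \<longlonglongrightarrow> 1 - 0"
    by (intro tendsto_diff tendsto_const LIMSEQ_Suc lim_const_over_n)
  moreover have "shrink_weight = (\<lambda>n. 1 - 1 / real (Suc (Suc n)))"
    by (auto simp: shrink_weight_def field_simps)
  ultimately show ?thesis by simp
qed

lemma lp_powsum_shrink_less:
  assumes x: "x \<in> lp p" and p: "p > 0" and nz: "x \<noteq> (\<lambda>n. 0)"
  shows "shrink x \<in> lp p" "lp_powsum p (shrink x) < lp_powsum p x"
proof -
  have sx: "summable (\<lambda>n. norm (x n) powr p)" using x by (simp add: mem_lp_iff)
  have le: "norm (shrink x n) \<le> norm (x n)" for n
    using shrink_weight_pos[of n] shrink_weight_less_1[of n]
    by (simp add: shrink_def norm_mult mult_left_le_one_le)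
  then have "norm (shrink x n) powr p \<le> norm (x n) powr p" for n using p by (intro powr_mono2) auto
  then show sh: "shrink x \<in> lp p"
    unfolding mem_lp_iff by (intro summable_comparison_test'[OF sx, where N=0]) auto
  have st: "summable (\<lambda>n. norm (shrink x n) powr p)" using sh by (simp add: mem_lp_iff)
  have nn: "0 \<le> norm (x n) powr p - norm (shrink x n) powr p" for n
    using le[of n] p powr_mono2[of p "norm (shrink x n)" "norm (x n)"] by simp
  obtain n where "x n \<noteq> 0" using nz by auto
  then have "norm (shrink x n) < norm (x n)"
    using shrink_weight_pos[of n] shrink_weight_less_1[of n] by (simp add: shrink_def norm_mult)
  then have "0 < norm (x n) powr p - norm (shrink x n) powr p"
    using p powr_less_mono2[of p "norm (shrink x n)" "norm (x n)"] by simp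
  then have "0 < (\<Sum>n. norm (x n) powr p - norm (shrink x n) powr p)"
    using suminf_pos_iff[OF summable_diff[OF sx st] nn] by blast
  then show "lp_powsum p (shrink x) < lp_powsum p x"
    unfolding lp_powsum_def using suminf_diff[OF sx st] by simp
qed

lemma shrink_lp_norm_le:
  assumes x: "x \<in> lp p" and p: "p > 0" and pq: "p \<le> q"
  shows "shrink x \<in> lp q" "lp_norm q (shrink x) \<le> lp_norm p x"
proof -
  have "shrink x \<in> lp p \<and> lp_norm p (shrink x) \<le> lp_norm p x"
  proof (cases "x = (\<lambda>n. 0)")
    case True
    then show ?thesis by (simp add: shrink_def zero_in_lp)
  next
    case False
    from lp_powsum_shrink_less[OF x p False] show ?thesis
      using lp_norm_less_iff[of "shrink x" p x] x p by simp
  qed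
  then show "shrink x \<in> lp q" "lp_norm q (shrink x) \<le> lp_norm p x"
    using lp_norm_mono_exponent[of "shrink x" p q] p pq by auto
qed

lemma shrink_unit_norm_less:
  assumes x: "x \<in> lp p" and xn: "lp_norm p x = 1" and p: "p > 0" and pq: "p \<le> q"
  shows "lp_norm q (shrink x) < 1"
proof -
  have "x \<noteq> (\<lambda>n. 0)" using xn by (auto simp: lp_norm_zero)
  from lp_powsum_shrink_less[OF x p this]
  have sh: "shrink x \<in> lp p" and "lp_norm p (shrink x) < 1"
    using lp_norm_less_iff[of "shrink x" p x] x xn p by simp_all
  moreover have "lp_norm q (shrink x) \<le> lp_norm p (shrink x)"
    using lp_norm_mono_exponent[OF sh p pq] by simp
  ultimately show ?thesis by linarith
qed

lemma lp_norm_shrink_basis_seq: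
  "q > 0 \<Longrightarrow> lp_norm q (shrink (basis_seq n) :: nat \<Rightarrow> 'a::real_normed_field) = shrink_weight n"
  using lp_norm_scale[OF basis_seq_in_lp, of q "of_real (shrink_weight n) :: 'a" n]
    shrink_weight_pos[of n]
  by (simp add: shrink_def basis_seq_def lp_norm_basis_seq if_distrib cong: if_cong)

lemma shrink_bounded_op:
  assumes "0 < p" "p \<le> q"
  shows "bounded_op p q (shrink :: (nat \<Rightarrow> 'a::real_normed_field) \<Rightarrow> _)"
  unfolding bounded_op_def
proof (intro conjI ballI allI)
  show "\<And>x. x \<in> lp p \<Longrightarrow> shrink x \<in> lp q" using shrink_lp_norm_le assms by blast
  show "\<exists>C. \<forall>x\<in>lp p. lp_norm q (shrink x :: nat \<Rightarrow> 'a) \<le> C * lp_norm p x"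
    using shrink_lp_norm_le assms by (intro exI[of _ 1]) auto
qed (simp_all add: shrink_def fun_eq_iff algebra_simps)

lemma shrink_op_norm:
  assumes p: "0 < p" and pq: "p \<le> q"
  shows "op_norm p q (shrink :: (nat \<Rightarrow> 'a::real_normed_field) \<Rightarrow> _) = 1"
  unfolding op_norm_def
proof (rule cSup_eq_non_empty)
  let ?A = "{lp_norm q (shrink x :: nat \<Rightarrow> 'a) | x. x \<in> lp p \<and> lp_norm p x = 1}"
  have weight: "shrink_weight n \<in> ?A" for n
    using basis_seq_in_lp lp_norm_basis_seq lp_norm_shrink_basis_seq[of q n, symmetric] p pq
    by (intro CollectI exI[of _ "basis_seq n"]) auto
  then show "?A \<noteq> {}" by blast
  show "\<And>a. a \<in> ?A \<Longrightarrow> a \<le> 1" using shrink_unit_norm_less p pq by fastforce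
  show "1 \<le> b" if "\<And>a. a \<in> ?A \<Longrightarrow> a \<le> b" for b
    using that weight by (intro LIMSEQ_le_const2[OF shrink_weight_tendsto_1]) auto
qed

lemma not_sBPBp_if_le:
  assumes p: "0 < p" and pq: "p \<le> q"
  shows "\<not> sBPBp TYPE('a::real_normed_field) p q"
proof
  let ?T = "shrink :: (nat \<Rightarrow> 'a) \<Rightarrow> _"
  assume H: "sBPBp TYPE('a) p q"
  have "bounded_op p q ?T \<and> op_norm p q ?T = 1"
    using shrink_bounded_op[OF p pq] shrink_op_norm[OF p pq] by simp
  from H[unfolded sBPBp_def, rule_format, OF zero_less_one this]
  obtain \<eta> where \<eta>: "\<eta> > 0" and attained: "\<forall>x0\<in>lp p. lp_norm p x0 = 1 \<and> lp_norm q (?T x0) > 1 - \<eta> \<longrightarrow>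
      (\<exists>x1\<in>lp p. lp_norm p x1 = 1 \<and> lp_norm q (?T x1) = 1 \<and> lp_norm p (\<lambda>n. x1 n - x0 n) < 1)"
    by blast
  have "eventually (\<lambda>n. shrink_weight n > 1 - \<eta>) sequentially"
    using \<eta> by (intro order_tendstoD(1)[OF shrink_weight_tendsto_1]) simp
  then obtain n where "shrink_weight n > 1 - \<eta>"
    using eventually_happens'[OF sequentially_bot] by blast
  then have "lp_norm q (?T (basis_seq n)) > 1 - \<eta>"
    using lp_norm_shrink_basis_seq[of q n, where 'a='a] p pq by simp
  then obtain x1 where x1: "x1 \<in> lp p" "lp_norm p x1 = 1" "lp_norm q (?T x1) = 1"
    using attained basis_seq_in_lp lp_norm_basis_seq by blast
  then show False using shrink_unit_norm_less[OF x1(1,2) p pq] by simp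
qed

theorem mainTheorem20:
  shows "(\<forall>p q. 1 \<le> q \<and> q < p \<longrightarrow>
            sBPBp TYPE(real) p q \<and> sBPBp TYPE(complex) p q) \<and>
         (\<forall>p q. 1 < p \<and> p \<le> q \<longrightarrow>
            \<not> sBPBp TYPE(real) p q \<and> \<not> sBPBp TYPE(complex) p q)"
proof (rule conjI; intro allI impI)
  fix p q :: real
  assume "1 \<le> q \<and> q < p"
  then show "sBPBp TYPE(real) p q \<and> sBPBp TYPE(complex) p q" by (simp add: sBPBp_if_less)
next
  fix p q :: real
  assume "1 < p \<and> p \<le> q"
  then show "\<not> sBPBp TYPE(real) p q \<and> \<not> sBPBp TYPE(complex) p q" by (simp add: not_sBPBp_if_le)
qed

end
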